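(* Let $c\ge2$, let $\Gamma=(V,E)$ be a $c$-uniform unoriented hypergraph with no isolated vertices, let $k\ge2$ and let $V_1,\dots,V_k$ be a partition of $V$. Assume there is an integer $m\ge1$ such that $|e\cap V_i|\in\{0,m\}$ for every $e\in E$ and every $i=1,\dots,k$. Then the functions $g_{ij}$ (for all distinct $i,j\in\{1,\dots,k\}$) are all eigenfunctions of the normalized Laplacian $L$ if and only if for all $i=1,\dots,k$ and all $v\in V$, \[ \bigl|\{e\in E: v\in e,\ e\cap V_i\neq\varnothing\}\bigr|=\begin{cases}\dfrac{(c/m-1)\deg v}{k-1}, & v\notin V_i,\\[2mm] \deg v, & v\in V_i.\end{cases} \] In this case the corresponding eigenvalue is $\dfrac{mk-c}{k-1}$.
   Context: A hypergraph has finite vertex set $V$ and edge set $E\subseteq\mathcal P(V)$; it is $c$-uniform if $|e|=c$ for all $e$, and unoriented means all incidences have orientation $+1$. $\deg v=|\{e\in E: v\in e\}|\ge1$, $D=\mathrm{diag}(\deg v)$, adjacency $A_{v,v}=0$ and $A_{v,w}=-|\{e\in E: v,w\in e\}|$ for $v\ne w$, normalized Laplacian $L=\mathrm{Id}-D^{-1}A$. Given a partition $V_1,\dots,V_k$ of $V$ and distinct $i,j$, the function $g_{ij}\colon V\to\mathbb R$ is defined by $g_{ij}(w)=1$ if $w\in V_i$, $g_{ij}(w)=-1$ if $w\in V_j$, and $g_{ij}(w)=0$ otherwise. *)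

theory Defs
  imports Complex_Main
begin

text \<open>A hypergraph on a finite vertex set V with edge set E, a set of subsets of V.
  It is unoriented: all incidences have orientation +1 (so no orientation data is needed).\<close>
definition hypergraph :: "'a set \<Rightarrow> 'a set set \<Rightarrow> bool" where
  "hypergraph V E \<longleftrightarrow> finite V \<and> E \<subseteq> Pow V"

definition uniform :: "nat \<Rightarrow> 'a set set \<Rightarrow> bool" where
  "uniform c E \<longleftrightarrow> (\<forall>e\<in>E. card e = c)"

definition hdeg :: "'a set set \<Rightarrow> 'a \<Rightarrow> nat" where
  "hdeg E v = card {e\<in>E. v \<in> e}"

definition no_isolated :: "'a set \<Rightarrow> 'a set set \<Rightarrow> bool" where
  "no_isolated V E \<longleftrightarrow> (\<forall>v\<in>V. hdeg E v \<ge> 1)"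

definition hadj :: "'a set set \<Rightarrow> 'a \<Rightarrow> 'a \<Rightarrow> real" where
  "hadj E v w = (if v = w then 0 else - real (card {e\<in>E. v \<in> e \<and> w \<in> e}))"

definition norm_lap :: "'a set \<Rightarrow> 'a set set \<Rightarrow> ('a \<Rightarrow> real) \<Rightarrow> 'a \<Rightarrow> real" where
  "norm_lap V E f v = f v - (1 / real (hdeg E v)) * (\<Sum>w\<in>V. hadj E v w * f w)"

definition eigenpair :: "'a set \<Rightarrow> 'a set set \<Rightarrow> ('a \<Rightarrow> real) \<Rightarrow> real \<Rightarrow> bool" where
  "eigenpair V E f lam \<longleftrightarrow> (\<exists>v\<in>V. f v \<noteq> 0) \<and> (\<forall>v\<in>V. norm_lap V E f v = lam * f v)"

definition eigenfunction :: "'a set \<Rightarrow> 'a set set \<Rightarrow> ('a \<Rightarrow> real) \<Rightarrow> bool" where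
  "eigenfunction V E f \<longleftrightarrow> (\<exists>lam. eigenpair V E f lam)"

definition is_partition :: "'a set \<Rightarrow> nat \<Rightarrow> (nat \<Rightarrow> 'a set) \<Rightarrow> bool" where
  "is_partition V k P \<longleftrightarrow>
     (\<forall>i\<in>{1..k}. P i \<noteq> {} \<and> P i \<subseteq> V) \<and>
     (\<forall>i\<in>{1..k}. \<forall>j\<in>{1..k}. i \<noteq> j \<longrightarrow> P i \<inter> P j = {}) \<and>
     (\<Union>i\<in>{1..k}. P i) = V"

definition gfun :: "(nat \<Rightarrow> 'a set) \<Rightarrow> nat \<Rightarrow> nat \<Rightarrow> 'a \<Rightarrow> real" where
  "gfun P i j w = (if w \<in> P i then 1 else if w \<in> P j then -1 else 0)"

end

theory Submission
  imports Defs
begin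

text \<open>For every function f one has (L f)(v) = (1/deg v) \<Sum>{f(w) | e \<ni> v, w \<in> e}.
  For f = g_ij the inner sum over an edge e is |e \<inter> V_i| - |e \<inter> V_j|, which by the block
  condition is m times the difference of the indicators of e meeting V_i and V_j. Writing
  N_i(v) for the number of edges at v meeting V_i, this gives
  (L g_ij)(v) = m (N_i(v) - N_j(v)) / deg v, and counting the c vertices of each edge at v
  blockwise gives m \<Sum>_i N_i(v) = c deg v.

  If all g_ij are eigenfunctions, evaluating at a vertex v outside V_i \<union> V_j, where g_ij
  vanishes, shows N_i(v) = N_j(v). So N_i(v) takes one value on the k - 1 blocks not
  containing v, while N_l(v) = deg v for the block V_l containing v; the counting identity
  then fixes that value. Conversely, with these values the formula for L g_ij reads
  L g_ij = (mk - c)/(k - 1) g_ij.\<close>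

lemma hypergraphD:
  assumes "hypergraph V E"
  shows "finite E" and "\<And>e. e \<in> E \<Longrightarrow> e \<subseteq> V" and "\<And>e. e \<in> E \<Longrightarrow> finite e"
  using assms finite_subset[of E "Pow V"] finite_subset[of _ V]
  by (auto simp: hypergraph_def)

lemma norm_lap_eq_edge_sum:
  assumes hg: "hypergraph V E" and v: "v \<in> V" and deg: "hdeg E v \<noteq> 0"
  shows "norm_lap V E f v = (\<Sum>e\<in>{e\<in>E. v \<in> e}. \<Sum>w\<in>e. f w) / real (hdeg E v)"
proof -
  define Ev where "Ev = {e\<in>E. v \<in> e}"
  have fin: "finite V" "finite Ev"
    and eV: "\<And>e. e \<in> Ev \<Longrightarrow> e \<subseteq> V \<and> finite e \<and> v \<in> e"
    using hg hypergraphD[OF hg] by (auto simp: hypergraph_def Ev_def)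
  have "hadj E v w * f w = - (\<Sum>e\<in>Ev. of_bool (w \<in> e - {v}) * f w)" for w
  proof -
    have "{e\<in>E. v \<in> e \<and> w \<in> e} = Ev \<inter> {e. w \<in> e}" by (auto simp: Ev_def)
    then show ?thesis
      using fin by (simp add: hadj_def sum_distrib_right[symmetric])
  qed
  then have "(\<Sum>w\<in>V. hadj E v w * f w) = - (\<Sum>e\<in>Ev. \<Sum>w\<in>V. of_bool (w \<in> e - {v}) * f w)"
    by (simp add: sum_negf sum.swap[of _ V])
  also have "\<dots> = - (\<Sum>e\<in>Ev. (\<Sum>w\<in>e. f w) - f v)"
  proof -
    have "(\<Sum>w\<in>V. of_bool (w \<in> e - {v}) * f w) = (\<Sum>w\<in>e. f w) - f v" if "e \<in> Ev" for e
    proof -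
      have "V \<inter> {w. w \<in> e - {v}} = e - {v}" using eV[OF that] by auto
      then show ?thesis
        using fin eV[OF that] by (simp add: sum_diff1 del: Diff_iff)
    qed
    then show ?thesis by simp
  qed
  finally show ?thesis
    using deg by (simp add: norm_lap_def sum_subtractf Ev_def hdeg_def field_simps)
qed

definition meet_deg :: "'a set set \<Rightarrow> 'a set \<Rightarrow> 'a \<Rightarrow> nat" where
  "meet_deg E Q v = card {e\<in>E. v \<in> e \<and> e \<inter> Q \<noteq> {}}"

lemma meet_deg_of_mem: "v \<in> Q \<Longrightarrow> meet_deg E Q v = hdeg E v"
  unfolding meet_deg_def hdeg_def by (metis disjoint_iff)

lemma meet_deg_eq_sum:
  "finite E \<Longrightarrow> real (meet_deg E Q v) = (\<Sum>e\<in>{e\<in>E. v \<in> e}. of_bool (e \<inter> Q \<noteq> {}))"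
  unfolding meet_deg_def by (simp add: Collect_conj_eq Int_assoc)

lemma gfun_eq_of_bool_diff:
  "P i \<inter> P j = {} \<Longrightarrow> gfun P i j w = of_bool (w \<in> P i) - of_bool (w \<in> P j)"
  unfolding gfun_def by auto

lemma sum_gfun_eq_card_diff:
  assumes "P i \<inter> P j = {}" and "finite e"
  shows "(\<Sum>w\<in>e. gfun P i j w) = real (card (e \<inter> P i)) - real (card (e \<inter> P j))"
  using assms by (simp add: gfun_eq_of_bool_diff sum_subtractf)

locale block_uniform_hypergraph =
  fixes V :: "'a set" and E :: "'a set set" and P :: "nat \<Rightarrow> 'a set" and c k m :: nat
  assumes hypergraph: "hypergraph V E" and uniform: "uniform c E"
    and no_isolated: "no_isolated V E" and partition: "is_partition V k P"
    and k_ge_2: "k \<ge> 2" and m_pos: "m \<ge> 1"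
    and block_card: "\<forall>e\<in>E. \<forall>i\<in>{1..k}. card (e \<inter> P i) \<in> {0, m}"
begin

lemma hdeg_pos: "v \<in> V \<Longrightarrow> real (hdeg E v) > 0"
  using no_isolated by (fastforce simp: no_isolated_def)

lemma block_nonempty_subset: "i \<in> {1..k} \<Longrightarrow> P i \<noteq> {} \<and> P i \<subseteq> V"
  using partition by (simp add: is_partition_def)

lemma block_cover: "v \<in> V \<Longrightarrow> \<exists>l\<in>{1..k}. v \<in> P l"
  using partition unfolding is_partition_def by blast

lemma blocks_disjoint: "\<lbrakk>i \<in> {1..k}; j \<in> {1..k}; i \<noteq> j\<rbrakk> \<Longrightarrow> P i \<inter> P j = {}"
  using partition by (simp add: is_partition_def)

lemma card_edge_block:
  "\<lbrakk>e \<in> E; i \<in> {1..k}\<rbrakk> \<Longrightarrow> real (card (e \<inter> P i)) = real m * of_bool (e \<inter> P i \<noteq> {})"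
  using block_card hypergraphD[OF hypergraph] by fastforce

lemma norm_lap_gfun:
  assumes "i \<in> {1..k}" "j \<in> {1..k}" "i \<noteq> j" "v \<in> V"
  shows "norm_lap V E (gfun P i j) v
    = real m * (real (meet_deg E (P i) v) - real (meet_deg E (P j) v)) / real (hdeg E v)"
proof -
  have "(\<Sum>w\<in>e. gfun P i j w) = real m * (of_bool (e \<inter> P i \<noteq> {}) - of_bool (e \<inter> P j \<noteq> {}))"
    if "e \<in> {e\<in>E. v \<in> e}" for e
    using that assms hypergraphD[OF hypergraph]
    by (simp add: sum_gfun_eq_card_diff blocks_disjoint card_edge_block right_diff_distrib)
  then show ?thesis
    using assms hdeg_pos hypergraphD[OF hypergraph]
    by (simp add: norm_lap_eq_edge_sum[OF hypergraph] meet_deg_eq_sum sum_subtractf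
        sum_distrib_left[symmetric] right_diff_distrib)
qed

lemma sum_meet_deg:
  assumes "v \<in> V"
  shows "real m * (\<Sum>i\<in>{1..k}. real (meet_deg E (P i) v)) = real c * real (hdeg E v)"
proof -
  have per_edge: "(\<Sum>i\<in>{1..k}. real m * of_bool (e \<inter> P i \<noteq> {})) = real c"
    if "e \<in> E" for e
  proof -
    have "(\<Sum>i\<in>{1..k}. card (e \<inter> P i)) = card (\<Union>i\<in>{1..k}. e \<inter> P i)"
      using hypergraphD(3)[OF hypergraph that]
      by (intro card_UN_disjoint[symmetric]) (simp, simp, blast dest: blocks_disjoint)
    also have "(\<Union>i\<in>{1..k}. e \<inter> P i) = e"
      using partition hypergraphD(2)[OF hypergraph that]
      by (auto simp: is_partition_def)
    finally show ?thesis
      using that uniform by (simp add: card_edge_block[symmetric] uniform_def flip: of_nat_sum)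
  qed
  have "real m * (\<Sum>i\<in>{1..k}. real (meet_deg E (P i) v))
      = (\<Sum>i\<in>{1..k}. \<Sum>e\<in>{e\<in>E. v \<in> e}. real m * of_bool (e \<inter> P i \<noteq> {}))"
    using hypergraphD(1)[OF hypergraph]
    by (simp add: meet_deg_eq_sum sum_distrib_left mult.commute)
  also have "\<dots> = (\<Sum>e\<in>{e\<in>E. v \<in> e}. \<Sum>i\<in>{1..k}. real m * of_bool (e \<inter> P i \<noteq> {}))"
    by (rule sum.swap)
  also have "\<dots> = real c * real (hdeg E v)"
    using per_edge by (simp add: hdeg_def)
  finally show ?thesis .
qed

definition meet_degs_balanced :: bool where
  "meet_degs_balanced \<longleftrightarrow> (\<forall>i\<in>{1..k}. \<forall>v\<in>V.
     real (meet_deg E (P i) v) =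
       (if v \<notin> P i then (real c / real m - 1) * real (hdeg E v) / (real k - 1)
        else real (hdeg E v)))"

lemma eigenpair_gfun_if_balanced:
  assumes balanced: meet_degs_balanced and ij: "i \<in> {1..k}" "j \<in> {1..k}" "i \<noteq> j"
  shows "eigenpair V E (gfun P i j) ((real m * real k - real c) / (real k - 1))"
proof -
  obtain w where "w \<in> P i" and "P i \<subseteq> V"
    using block_nonempty_subset[OF ij(1)] by blast
  then have "\<exists>v\<in>V. gfun P i j v \<noteq> 0"
    by (auto simp: gfun_def)
  moreover have "norm_lap V E (gfun P i j) v
      = (real m * real k - real c) / (real k - 1) * gfun P i j v" if v: "v \<in> V" for v
  proof -
    define d where "d = real (hdeg E v)"
    define \<beta> where "\<beta> = (real c / real m - 1) * d / (real k - 1)"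
    \<comment> \<open>Both cases of the balance condition in one formula,
      so that L g_ij visibly factors through g_ij.\<close>
    have meet: "real (meet_deg E (P l) v) = \<beta> + (d - \<beta>) * of_bool (v \<in> P l)"
      if "l \<in> {1..k}" for l
      using balanced that v by (simp add: meet_degs_balanced_def d_def \<beta>_def)
    have "norm_lap V E (gfun P i j) v = real m * (d - \<beta>) / d * gfun P i j v"
      using ij v by (simp add: norm_lap_gfun meet gfun_eq_of_bool_diff blocks_disjoint
          flip: d_def right_diff_distrib)
    also have "real m * (d - \<beta>) / d = (real m * real k - real c) / (real k - 1)"
      using hdeg_pos[OF v] m_pos k_ge_2 unfolding \<beta>_def d_def
      by (simp add: field_simps)
    finally show ?thesis .
  qed
  ultimately show ?thesis
    by (simp add: eigenpair_def)
qed

lemma balanced_if_eigenfunctions: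
  assumes eig: "\<forall>i\<in>{1..k}. \<forall>j\<in>{1..k}. i \<noteq> j \<longrightarrow> eigenfunction V E (gfun P i j)"
  shows meet_degs_balanced
  unfolding meet_degs_balanced_def
proof (intro ballI)
  fix i v assume i: "i \<in> {1..k}" and v: "v \<in> V"
  show "real (meet_deg E (P i) v) =
    (if v \<notin> P i then (real c / real m - 1) * real (hdeg E v) / (real k - 1)
     else real (hdeg E v))"
  proof (cases "v \<in> P i")
    case True
    then show ?thesis by (simp add: meet_deg_of_mem)
  next
    case False
    obtain l where l: "l \<in> {1..k}" "v \<in> P l"
      using block_cover[OF v] ..
    have same: "real (meet_deg E (P j) v) = real (meet_deg E (P i) v)"
      if j: "j \<in> {1..k} - {l}" for j
    proof (cases "j = i")
      case False
      have "eigenfunction V E (gfun P i j)"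
        using eig[rule_format, of i j] i j False by simp
      then obtain \<mu> where "eigenpair V E (gfun P i j) \<mu>"
        unfolding eigenfunction_def ..
      moreover have "v \<notin> P j"
        using blocks_disjoint[of j l] j l by auto
      then have "gfun P i j v = 0"
        using \<open>v \<notin> P i\<close> by (simp add: gfun_def)
      ultimately have "norm_lap V E (gfun P i j) v = 0"
        using v by (simp add: eigenpair_def)
      then show ?thesis
        using norm_lap_gfun[of i j v] i j False v hdeg_pos[OF v] m_pos by simp
    qed simp
    have "real c * real (hdeg E v) = real m * (\<Sum>j\<in>{1..k}. real (meet_deg E (P j) v))"
      using sum_meet_deg[OF v] by simp
    also have "(\<Sum>j\<in>{1..k}. real (meet_deg E (P j) v))
        = real (meet_deg E (P l) v) + (\<Sum>j\<in>{1..k} - {l}. real (meet_deg E (P j) v))"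
      using l(1) by (simp add: sum.remove)
    also have "\<dots> = real (hdeg E v) + (real k - 1) * real (meet_deg E (P i) v)"
      using l k_ge_2 by (simp add: same meet_deg_of_mem of_nat_diff)
    finally have "real c * real (hdeg E v)
        = real m * (real (hdeg E v) + (real k - 1) * real (meet_deg E (P i) v))" .
    then show ?thesis
      using False m_pos k_ge_2 by (simp add: field_simps)
  qed
qed

end

theorem mainTheorem7:
  fixes V :: "'a set" and E :: "'a set set" and P :: "nat \<Rightarrow> 'a set"
    and c k m :: nat
  assumes "c \<ge> 2"
    and "hypergraph V E" and "uniform c E" and "no_isolated V E"
    and "k \<ge> 2" and "is_partition V k P"
    and "m \<ge> 1"
    and "\<forall>e\<in>E. \<forall>i\<in>{1..k}. card (e \<inter> P i) \<in> {0, m}"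
  shows "((\<forall>i\<in>{1..k}. \<forall>j\<in>{1..k}. i \<noteq> j \<longrightarrow> eigenfunction V E (gfun P i j)) \<longleftrightarrow>
          (\<forall>i\<in>{1..k}. \<forall>v\<in>V.
             real (card {e\<in>E. v \<in> e \<and> e \<inter> P i \<noteq> {}}) =
               (if v \<notin> P i
                then (real c / real m - 1) * real (hdeg E v) / (real k - 1)
                else real (hdeg E v))))
       \<and> ((\<forall>i\<in>{1..k}. \<forall>v\<in>V.
             real (card {e\<in>E. v \<in> e \<and> e \<inter> P i \<noteq> {}}) =
               (if v \<notin> P i
                then (real c / real m - 1) * real (hdeg E v) / (real k - 1)
                else real (hdeg E v)))
          \<longrightarrow> (\<forall>i\<in>{1..k}. \<forall>j\<in>{1..k}. i \<noteq> j \<longrightarrow>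
                 eigenpair V E (gfun P i j) ((real m * real k - real c) / (real k - 1))))"
proof -
  interpret block_uniform_hypergraph V E P c k m
    using assms(2-8) by unfold_locales
  show ?thesis
    unfolding meet_deg_def[symmetric] meet_degs_balanced_def[symmetric]
    using balanced_if_eigenfunctions eigenpair_gfun_if_balanced
    unfolding eigenfunction_def by blast
qed

end
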